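(* Every virtually solvable subgroup of $PL_o(I)$ is solvable.
   Context: $PL_o(I)$ is the group of orientation-preserving piecewise-linear homeomorphisms of $I=[0,1]$ with finitely many breaks in slope. *)

theory Defs
  imports "HOL-Analysis.Analysis" "HOL-Algebra.Solvable_Groups" "HOL-Algebra.Coset"
begin

text \<open>Elements are represented as functions real => real that are the
identity outside [0,1], so that composition gives a group with identity id.\<close>

definition PL_homeo_I :: "(real \<Rightarrow> real) \<Rightarrow> bool" where
  "PL_homeo_I f \<longleftrightarrow>
     continuous_on {0..1} f \<and>
     strict_mono_on {0..1} f \<and>
     f 0 = 0 \<and> f 1 = 1 \<and>
     (\<exists>S. finite S \<and>
        (\<forall>a b. 0 \<le> a \<and> a < b \<and> b \<le> 1 \<and> {a<..<b} \<inter> S = {} \<longrightarrow>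
           (\<exists>m c. \<forall>x\<in>{a..b}. f x = m * x + c))) \<and>
     (\<forall>x. x \<notin> {0..1} \<longrightarrow> f x = x)"

definition PLoI :: "(real \<Rightarrow> real) monoid" where
  "PLoI = \<lparr>carrier = {f. PL_homeo_I f}, mult = (\<circ>), one = id\<rparr>"

definition virtually_solvable :: "('a, 'b) monoid_scheme \<Rightarrow> bool" where
  "virtually_solvable G \<longleftrightarrow>
     (\<exists>K. subgroup K G \<and> finite (rcosets\<^bsub>G\<^esub> K) \<and> solvable (G\<lparr>carrier := K\<rparr>))"

end

theory Submission
  imports Defs
begin

text \<open>A positive power of an increasing map fixes only the points the map itself fixes.
  Hence if every element of a subgroup H of PL_o(I) has a positive power in a solvable
  subgroup K, then H fixes the set P of global fixed points of K.  One-sided slopes at points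
  of P are multiplicative, so the commutator subgroup H' consists of elements that are the
  identity near every point of P, the germ kernel Z(H).  The heart of the argument is that
  Z(K) has smaller derived length than K.  An element y of Z(K) is the identity near the ends
  of every orbital (a, b) of K, and if g in K pushes a compact part [c, d] of the orbital into
  the region near a where y is trivial, then y agrees on [c, d] with the commutator [y, g] of K'.
  This agreement propagates along the derived series, so an element of the k-th derived
  subgroup of Z(K) agrees on compact parts of orbitals with elements of the (k+1)-th derived
  subgroup of K, which is trivial.  Induction on the derived length of K shows that H is
  solvable, and a subgroup of finite index has the power property by the pigeonhole principle
  on its cosets.\<close>

lemma strict_mono_surj_image_Icc:
  fixes f :: "'a::linorder \<Rightarrow> 'b::linorder"
  assumes "strict_mono f" "surj f"
  shows "f ` {a..b} = {f a..f b}"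
proof
  show "f ` {a..b} \<subseteq> {f a..f b}"
    using assms(1) by (auto simp: strict_mono_less_eq)
  show "{f a..f b} \<subseteq> f ` {a..b}"
  proof
    fix y assume "y \<in> {f a..f b}"
    moreover obtain x where "y = f x" using assms(2) by (metis surjD)
    ultimately show "y \<in> f ` {a..b}" using assms(1) by (auto simp: strict_mono_less_eq)
  qed
qed

lemma strict_mono_surj_image_Ioo:
  fixes f :: "'a::linorder \<Rightarrow> 'b::linorder"
  assumes "strict_mono f" "surj f"
  shows "f ` {a<..<b} = {f a<..<f b}"
proof
  show "f ` {a<..<b} \<subseteq> {f a<..<f b}"
    using assms(1) by (auto simp: strict_mono_less)
  show "{f a<..<f b} \<subseteq> f ` {a<..<b}"
  proof
    fix y assume "y \<in> {f a<..<f b}"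
    moreover obtain x where "y = f x" using assms(2) by (metis surjD)
    ultimately show "y \<in> f ` {a<..<b}" using assms(1) by (auto simp: strict_mono_less)
  qed
qed

lemma strict_mono_inv:
  fixes f :: "'a::linorder \<Rightarrow> 'b::linorder"
  assumes "strict_mono f" "surj f"
  shows "strict_mono (inv_into UNIV f)"
proof (rule strict_monoI, rule ccontr)
  fix x y assume "x < y" "\<not> inv_into UNIV f x < inv_into UNIV f y"
  then have "f (inv_into UNIV f y) \<le> f (inv_into UNIV f x)"
    using assms(1) by (simp add: strict_mono_less_eq)
  then show False using \<open>x < y\<close> assms(2) by (simp add: surj_f_inv_f)
qed

lemma strict_mono_funpow_fixed:
  fixes h :: "'a::linorder \<Rightarrow> 'a"
  assumes "strict_mono h" "(h ^^ n) p = p" "0 < n"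
  shows "h p = p"
proof -
  have "(p < h p \<longrightarrow> p < (h ^^ Suc m) p) \<and> (h p < p \<longrightarrow> (h ^^ Suc m) p < p)" for m
  proof (induction m)
    case (Suc m)
    then show ?case
      using strict_monoD[OF assms(1), of p "(h ^^ Suc m) p"] strict_monoD[OF assms(1), of "(h ^^ Suc m) p" p]
      by auto
  qed simp
  moreover obtain m where "n = Suc m" using assms(3) gr0_implies_Suc by blast
  ultimately show ?thesis using assms(2) by (metis less_irrefl linorder_neqE)
qed

lemma (in group) exp_of_derived_subset:
  assumes "subgroup H G"
  shows "(derived G ^^ n) H \<subseteq> H"
proof (induction n)
  case (Suc n)
  then show ?case using derived_incl[OF Suc assms] by simp
qed simp

lemma (in group) solvable_subgroup_iff:
  assumes "subgroup H G"
  shows "solvable (G\<lparr>carrier := H\<rparr>) \<longleftrightarrow> (\<exists>n. (derived G ^^ n) H = {\<one>})"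
proof -
  have "(derived (G\<lparr>carrier := H\<rparr>) ^^ n) H = (derived G ^^ n) H" for n
  proof (induction n)
    case (Suc n)
    then show ?case using derived_consistent[OF exp_of_derived_subset[OF assms] assms] by simp
  qed simp
  then show ?thesis using group.solvable_iff_trivial_derived_seq[OF subgroup_imp_group[OF assms]] by simp
qed

lemma (in group) finite_index_pow_in_subgroup:
  assumes K: "subgroup K G" "finite (rcosets K)" and h: "h \<in> carrier G"
  shows "\<exists>n>0. h [^] (n::nat) \<in> K"
proof -
  let ?F = "\<lambda>i::nat. K #> h [^] i"
  have "range ?F \<subseteq> rcosets K" using rcosetsI[OF subgroup.subset[OF K(1)]] h by blast
  then have "\<not> inj ?F" using K(2) finite_subset finite_imageD infinite_UNIV_nat by blast
  then obtain i j where ij: "i < j" "?F i = ?F j" unfolding inj_def by (metis linorder_neqE)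
  then have "h [^] j \<in> K #> h [^] i" using repr_independenceD[OF K(1)] h by simp
  then have "h [^] j \<otimes> inv (h [^] i) \<in> K" using subgroup.rcos_module_imp[OF K(1) is_group] h by simp
  moreover have "h [^] j = h [^] (j - i) \<otimes> h [^] i" using nat_pow_mult[OF h] ij(1) by simp
  ultimately have "h [^] (j - i) \<in> K" using h by (simp add: m_assoc)
  then show ?thesis using ij(1) by (intro exI[of _ "j - i"]) simp
qed

section \<open>Piecewise-linear homeomorphisms of the interval\<close>

definition affine_on :: "real set \<Rightarrow> (real \<Rightarrow> real) \<Rightarrow> bool" where
  "affine_on A f \<longleftrightarrow> (\<exists>m c. \<forall>x\<in>A. f x = m * x + c)"

lemma affine_on_comp:
  assumes "affine_on A g" "affine_on (g ` A) f"
  shows "affine_on A (f \<circ> g)"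
proof -
  obtain m c where g: "\<forall>x\<in>A. g x = m * x + c" using assms(1) by (auto simp: affine_on_def)
  obtain m' c' where f: "\<forall>y\<in>g ` A. f y = m' * y + c'" using assms(2) by (auto simp: affine_on_def)
  have "\<forall>x\<in>A. (f \<circ> g) x = (m' * m) * x + (m' * c + c')"
    using f g by (simp add: algebra_simps)
  then show ?thesis by (auto simp: affine_on_def)
qed

lemma affine_on_inv:
  assumes "inj f" "affine_on A f"
  shows "affine_on (f ` A) (inv_into UNIV f)"
proof -
  obtain m c where f: "\<forall>x\<in>A. f x = m * x + c" using assms(2) by (auto simp: affine_on_def)
  show ?thesis
  proof (cases "A = {}")
    case False
    then obtain x0 where "x0 \<in> A" by blast
    show ?thesis
    proof (cases "m = 0")
      case True
      have "x = x0" if "x \<in> A" for x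
      proof (rule injD[OF assms(1)])
        show "f x = f x0" using f that \<open>x0 \<in> A\<close> True by simp
      qed
      then have "A = {x0}" using \<open>x0 \<in> A\<close> by blast
      then have "\<forall>y\<in>f ` A. inv_into UNIV f y = 0 * y + x0" using assms(1) by simp
      then show ?thesis unfolding affine_on_def by blast
    next
      case False
      have "inv_into UNIV f (f x) = (1 / m) * f x + (- c / m)" if "x \<in> A" for x
      proof -
        have "x = (1 / m) * f x + (- c / m)" using f that False by (simp add: field_simps)
        then show ?thesis using inv_f_f[OF assms(1)] by simp
      qed
      then have "\<forall>y\<in>f ` A. inv_into UNIV f y = (1 / m) * y + (- c / m)" by blast
      then show ?thesis unfolding affine_on_def by blast
    qed
  qed (simp add: affine_on_def)
qed

lemma affine_on_subset: "affine_on B f \<Longrightarrow> A \<subseteq> B \<Longrightarrow> affine_on A f"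
  by (auto simp: affine_on_def)

lemma PL_homeo_I_fixes:
  assumes "PL_homeo_I f" "x \<notin> {0<..<1}"
  shows "f x = x"
  using assms unfolding PL_homeo_I_def by (cases "x \<in> {0..1}") auto

lemma PL_homeo_I_strict_mono:
  assumes "PL_homeo_I f"
  shows "strict_mono f"
proof (rule strict_monoI)
  fix x y :: real assume "x < y"
  have mono01: "f u < f v" if "u \<in> {0..1}" "v \<in> {0..1}" "u < v" for u v
    using assms that unfolding PL_homeo_I_def strict_mono_on_def by blast
  have mono01_le: "f u \<le> f v" if "u \<in> {0..1}" "v \<in> {0..1}" "u \<le> v" for u v
    using mono01[OF that(1,2)] that(3) by (cases "u = v") auto
  have outside: "f u = u" if "u \<notin> {0<..<1}" for u
    using PL_homeo_I_fixes[OF assms that] .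
  show "f x < f y"
  proof (cases "x \<in> {0..1}"; cases "y \<in> {0..1}")
    assume "x \<in> {0..1}" "y \<in> {0..1}"
    then show ?thesis using mono01 \<open>x < y\<close> by blast
  next
    assume "x \<in> {0..1}" "y \<notin> {0..1}"
    then have "f x \<le> f 1" "f 1 = 1" "1 < y" "f y = y"
      using mono01_le[of x 1] outside[of 1] outside[of y] \<open>x < y\<close> by auto
    then show ?thesis by linarith
  next
    assume "x \<notin> {0..1}" "y \<in> {0..1}"
    then have "f 0 \<le> f y" "f 0 = 0" "x < 0" "f x = x"
      using mono01_le[of 0 y] outside[of 0] outside[of x] \<open>x < y\<close> by auto
    then show ?thesis by linarith
  next
    assume "x \<notin> {0..1}" "y \<notin> {0..1}"
    then have "f x = x" "f y = y" using outside[of x] outside[of y] by auto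
    then show ?thesis using \<open>x < y\<close> by simp
  qed
qed

lemma PL_homeo_I_bij:
  assumes "PL_homeo_I f"
  shows "bij f"
proof (rule bijI)
  show "inj f" using PL_homeo_I_strict_mono[OF assms] strict_mono_imp_inj_on by blast
  have "y \<in> range f" for y
  proof (cases "y \<in> {0..1}")
    case True
    have "continuous_on {0..1} f" "f 0 = 0" "f 1 = 1" using assms by (auto simp: PL_homeo_I_def)
    then obtain x where "f x = y" using IVT'[of f 0 y 1] True by auto
    then show ?thesis by (metis rangeI)
  next
    case False
    then have "f y = y" by (intro PL_homeo_I_fixes[OF assms]) auto
    then show ?thesis by (metis rangeI)
  qed
  then show "surj f" by blast
qed

lemma PL_homeo_I_image:
  assumes "PL_homeo_I f"
  shows "f ` {0..1} = {0..1}"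
proof -
  have "f 0 = 0" "f 1 = 1" using assms by (auto simp: PL_homeo_I_def)
  then show ?thesis
    using strict_mono_surj_image_Icc[OF PL_homeo_I_strict_mono[OF assms] bij_is_surj[OF PL_homeo_I_bij[OF assms]]]
    by simp
qed

lemma PL_homeo_I_continuous:
  assumes "PL_homeo_I f"
  shows "continuous_on UNIV f"
proof -
  have "continuous_on {..0} f" "continuous_on {1..} f"
    using PL_homeo_I_fixes[OF assms] by (auto intro: continuous_on_cong[THEN iffD1, OF refl _ continuous_on_id])
  moreover have "continuous_on {0..1} f" using assms by (simp add: PL_homeo_I_def)
  ultimately have "continuous_on ({..0} \<union> {0..1} \<union> {1..}) f"
    by (intro continuous_on_closed_Un) auto
  moreover have "{..0} \<union> {0..1} \<union> {1..} = (UNIV :: real set)" by auto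
  ultimately show ?thesis by simp
qed

lemma PL_homeo_I_breakpoints:
  assumes "PL_homeo_I f"
  obtains S where "finite S" "\<And>u v. u < v \<Longrightarrow> {u<..<v} \<inter> S = {} \<Longrightarrow> affine_on {u..v} f"
proof -
  obtain S where S: "finite S"
    "\<And>a b. 0 \<le> a \<Longrightarrow> a < b \<Longrightarrow> b \<le> 1 \<Longrightarrow> {a<..<b} \<inter> S = {} \<Longrightarrow> affine_on {a..b} f"
    using assms unfolding PL_homeo_I_def affine_on_def by metis
  have id_on: "affine_on {u..v} f" if "v \<le> 0 \<or> 1 \<le> u" for u v
    using PL_homeo_I_fixes[OF assms] that unfolding affine_on_def
    by (intro exI[of _ 1] exI[of _ 0]) auto
  show ?thesis
  proof (rule that)
    show "finite ({0, 1} \<union> S)" using S(1) by simp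
    fix u v :: real assume uv: "u < v" "{u<..<v} \<inter> ({0, 1} \<union> S) = {}"
    then have "v \<le> 0 \<or> 1 \<le> u \<or> (0 \<le> u \<and> v \<le> 1)" by auto
    then show "affine_on {u..v} f" using S(2)[of u v] id_on[of v u] uv by auto
  qed
qed

lemma PL_homeo_I_intro:
  assumes "continuous_on {0..1} f" "strict_mono f" "f 0 = 0" "f 1 = 1"
    and "\<And>x. x \<notin> {0..1} \<Longrightarrow> f x = x"
    and "finite S" "\<And>u v. u < v \<Longrightarrow> {u<..<v} \<inter> S = {} \<Longrightarrow> affine_on {u..v} f"
  shows "PL_homeo_I f"
  unfolding PL_homeo_I_def
proof (intro conjI exI[of _ S])
  show "strict_mono_on {0..1} f" using assms(2) by (simp add: strict_mono_on_def strict_mono_less)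
  show "\<forall>a b. 0 \<le> a \<and> a < b \<and> b \<le> 1 \<and> {a<..<b} \<inter> S = {} \<longrightarrow> (\<exists>m c. \<forall>x\<in>{a..b}. f x = m * x + c)"
    using assms(7) by (auto simp: affine_on_def)
qed (use assms in auto)

lemma PL_homeo_I_comp:
  assumes f: "PL_homeo_I f" and g: "PL_homeo_I g"
  shows "PL_homeo_I (f \<circ> g)"
proof -
  obtain Sf where Sf: "finite Sf" "\<And>u v. u < v \<Longrightarrow> {u<..<v} \<inter> Sf = {} \<Longrightarrow> affine_on {u..v} f"
    using PL_homeo_I_breakpoints[OF f] by blast
  obtain Sg where Sg: "finite Sg" "\<And>u v. u < v \<Longrightarrow> {u<..<v} \<inter> Sg = {} \<Longrightarrow> affine_on {u..v} g"
    using PL_homeo_I_breakpoints[OF g] by blast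
  have mono_g: "strict_mono g" and surj_g: "surj g"
    using PL_homeo_I_strict_mono[OF g] PL_homeo_I_bij[OF g] by (auto simp: bij_is_surj)
  have "affine_on {u..v} (f \<circ> g)" if "u < v" "{u<..<v} \<inter> (Sg \<union> g -` Sf) = {}" for u v
  proof (rule affine_on_comp)
    show "affine_on {u..v} g" using Sg(2) that by blast
    have "g ` {u<..<v} \<inter> Sf = {}" using that(2) by auto
    then have "{g u<..<g v} \<inter> Sf = {}" by (simp add: strict_mono_surj_image_Ioo[OF mono_g surj_g])
    then show "affine_on (g ` {u..v}) f"
      using Sf(2)[of "g u" "g v"] that(1) mono_g strict_mono_surj_image_Icc[OF mono_g surj_g]
      by (simp add: strict_mono_less)
  qed
  moreover have "finite (Sg \<union> g -` Sf)"
    using Sf(1) Sg(1) finite_vimageI[OF _ strict_mono_imp_inj_on[OF mono_g]] by blast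
  moreover have "continuous_on {0..1} (f \<circ> g)"
    using continuous_on_compose[OF continuous_on_subset[OF PL_homeo_I_continuous[OF g] subset_UNIV]
        continuous_on_subset[OF PL_homeo_I_continuous[OF f] subset_UNIV]] .
  moreover have "strict_mono (f \<circ> g)"
    using mono_g PL_homeo_I_strict_mono[OF f] by (simp add: strict_mono_def)
  moreover have "(f \<circ> g) x = x" if "x \<notin> {0<..<1}" for x
    using PL_homeo_I_fixes[OF f that] PL_homeo_I_fixes[OF g that] by simp
  ultimately show ?thesis by (intro PL_homeo_I_intro[where S = "Sg \<union> g -` Sf"]) auto
qed

lemma PL_homeo_I_inv:
  assumes f: "PL_homeo_I f"
  shows "PL_homeo_I (inv_into UNIV f)"
proof -
  let ?h = "inv_into UNIV f"
  obtain S where S: "finite S" "\<And>u v. u < v \<Longrightarrow> {u<..<v} \<inter> S = {} \<Longrightarrow> affine_on {u..v} f"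
    using PL_homeo_I_breakpoints[OF f] by blast
  have mono_f: "strict_mono f" and bij_f: "bij f"
    using PL_homeo_I_strict_mono[OF f] PL_homeo_I_bij[OF f] by auto
  then have inj_f: "inj f" and surj_f: "surj f" by (auto simp: bij_is_inj bij_is_surj)
  have mono_h: "strict_mono ?h" using strict_mono_inv[OF mono_f surj_f] .
  have fixed: "?h x = x" if "f x = x" for x using inv_f_eq[OF inj_f that] .
  have "affine_on {u..v} ?h" if "u < v" "{u<..<v} \<inter> f ` S = {}" for u v
  proof -
    have "{?h u<..<?h v} \<inter> S = {}"
      using that(2) strict_mono_surj_image_Ioo[OF mono_f surj_f, of "?h u" "?h v"]
      by (auto simp: surj_f_inv_f[OF surj_f])
    then have "affine_on {?h u..?h v} f" using S(2) that(1) mono_h by (simp add: strict_mono_less)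
    then have "affine_on (f ` {?h u..?h v}) ?h" by (rule affine_on_inv[OF inj_f])
    moreover have "f ` {?h u..?h v} = {u..v}"
      using strict_mono_surj_image_Icc[OF mono_f surj_f] by (simp add: surj_f_inv_f[OF surj_f])
    ultimately show ?thesis by simp
  qed
  moreover have "continuous_on (f ` {0..1}) ?h"
    by (rule continuous_on_inv[OF continuous_on_subset[OF PL_homeo_I_continuous[OF f] subset_UNIV]
          compact_Icc]) (simp add: inv_f_f[OF inj_f])
  then have "continuous_on {0..1} ?h" by (simp add: PL_homeo_I_image[OF f])
  moreover have "?h x = x" if "x \<notin> {0<..<1}" for x
    using fixed PL_homeo_I_fixes[OF f that] by simp
  moreover have "finite (f ` S)" using S(1) by simp
  ultimately show ?thesis using mono_h by (intro PL_homeo_I_intro[where S = "f ` S"]) auto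
qed

lemma carrier_PLoI [simp]: "carrier PLoI = {f. PL_homeo_I f}"
  and mult_PLoI [simp]: "mult PLoI = (\<circ>)"
  and one_PLoI [simp]: "one PLoI = id"
  by (auto simp: PLoI_def)

lemma PL_homeo_I_id: "PL_homeo_I id"
proof (rule PL_homeo_I_intro[of _ "{}"])
  show "affine_on {u..v} id" for u v
    unfolding affine_on_def by (intro exI[of _ 1] exI[of _ 0]) simp
qed (auto simp: strict_mono_def)

lemma group_PLoI: "group PLoI"
proof (rule groupI)
  fix f assume "f \<in> carrier PLoI"
  then have "PL_homeo_I (inv_into UNIV f)" "inv_into UNIV f \<circ> f = id"
    using PL_homeo_I_inv PL_homeo_I_bij by (auto simp: bij_is_inj)
  then show "\<exists>g\<in>carrier PLoI. g \<otimes>\<^bsub>PLoI\<^esub> f = \<one>\<^bsub>PLoI\<^esub>" by auto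
qed (auto simp: PL_homeo_I_comp PL_homeo_I_id comp_assoc)

interpretation PLoI: group PLoI
  by (rule group_PLoI)

lemma PLoI_strict_mono: "f \<in> carrier PLoI \<Longrightarrow> strict_mono f"
  by (simp add: PL_homeo_I_strict_mono)

lemma PLoI_isCont: "f \<in> carrier PLoI \<Longrightarrow> isCont f x"
  using PL_homeo_I_continuous by (simp add: continuous_on_eq_continuous_at)

lemma PLoI_inv_apply:
  assumes "f \<in> carrier PLoI"
  shows "(inv\<^bsub>PLoI\<^esub> f) (f x) = x" "f ((inv\<^bsub>PLoI\<^esub> f) x) = x"
  using fun_cong[OF PLoI.l_inv[OF assms]] fun_cong[OF PLoI.r_inv[OF assms]] by simp_all

lemma PLoI_inv_fixed_iff:
  assumes "f \<in> carrier PLoI"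
  shows "(inv\<^bsub>PLoI\<^esub> f) p = p \<longleftrightarrow> f p = p"
  by (metis PLoI_inv_apply[OF assms])

lemma PLoI_pow: "f [^]\<^bsub>PLoI\<^esub> (n::nat) = f ^^ n"
  by (induction n) (simp_all add: funpow_Suc_right del: funpow.simps)

lemma PLoI_pow_fixed:
  assumes "h \<in> carrier PLoI" "(h [^]\<^bsub>PLoI\<^esub> (n::nat)) p = p" "0 < n"
  shows "h p = p"
  using strict_mono_funpow_fixed[OF PLoI_strict_mono[OF assms(1)]] assms(2,3) by (simp add: PLoI_pow)

section \<open>One-sided slopes at fixed points\<close>

text \<open>The side s = 1 or s = -1 selects the right or the left germ of f at its fixed point p,
  which is the linear map x \<mapsto> p + m (x - p).\<close>

definition has_side_slope :: "real \<Rightarrow> (real \<Rightarrow> real) \<Rightarrow> real \<Rightarrow> real \<Rightarrow> bool" where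
  "has_side_slope s f p m \<longleftrightarrow> 0 < m \<and> (\<exists>e>0. \<forall>t\<in>{0..e}. f (p + s * t) = p + m * (s * t))"

lemma has_side_slope_comp:
  assumes "has_side_slope s f p m1" "has_side_slope s g p m2"
  shows "has_side_slope s (f \<circ> g) p (m1 * m2)"
proof -
  obtain e1 where e1: "e1 > 0" "\<forall>t\<in>{0..e1}. f (p + s * t) = p + m1 * (s * t)" "m1 > 0"
    using assms(1) by (auto simp: has_side_slope_def)
  obtain e2 where e2: "e2 > 0" "\<forall>t\<in>{0..e2}. g (p + s * t) = p + m2 * (s * t)" "m2 > 0"
    using assms(2) by (auto simp: has_side_slope_def)
  have "(f \<circ> g) (p + s * t) = p + (m1 * m2) * (s * t)" if "t \<in> {0..min e2 (e1 / m2)}" for t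
  proof -
    have "m2 * t \<in> {0..e1}" using that e2(3) by (auto simp: field_simps)
    then have "f (p + s * (m2 * t)) = p + m1 * (s * (m2 * t))" using e1(2) by blast
    moreover have "g (p + s * t) = p + m2 * (s * t)" using e2(2) that by auto
    ultimately show ?thesis by (simp add: ac_simps)
  qed
  moreover have "min e2 (e1 / m2) > 0" using e1 e2 by simp
  ultimately show ?thesis using e1(3) e2(3) unfolding has_side_slope_def by (meson mult_pos_pos)
qed

lemma has_side_slope_left_inverse:
  assumes "\<And>x. g (f x) = x" "has_side_slope s f p m"
  shows "has_side_slope s g p (1 / m)"
proof -
  obtain e where e: "e > 0" "\<forall>t\<in>{0..e}. f (p + s * t) = p + m * (s * t)" "m > 0"
    using assms(2) by (auto simp: has_side_slope_def)
  have "g (p + s * t) = p + (1 / m) * (s * t)" if "t \<in> {0..m * e}" for t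
  proof -
    have "t / m \<in> {0..e}" using that e(3) by (auto simp: field_simps)
    then have "f (p + s * (t / m)) = p + m * (s * (t / m))" using e(2) by blast
    also have "\<dots> = p + s * t" using e(3) by simp
    finally have "g (p + s * t) = p + s * (t / m)" using assms(1) by metis
    then show ?thesis by simp
  qed
  moreover have "m * e > 0" using e by simp
  ultimately show ?thesis using e(3) unfolding has_side_slope_def by auto
qed

lemma PL_homeo_I_affine_near:
  assumes "PL_homeo_I f" "s \<in> {-1, 1}"
  obtains e where "e > 0" "affine_on ((\<lambda>t. p + s * t) ` {0..e}) f"
proof -
  obtain S where S: "finite S" "\<And>u v. u < v \<Longrightarrow> {u<..<v} \<inter> S = {} \<Longrightarrow> affine_on {u..v} f"
    using PL_homeo_I_breakpoints[OF assms(1)] by blast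
  obtain e where e: "e > 0" "\<forall>x\<in>S. x \<noteq> p \<longrightarrow> e \<le> dist p x"
    using finite_set_avoid[OF S(1)] by blast
  have right: "affine_on {p..p + e} f" and left: "affine_on {p - e..p} f"
    using S(2)[of p "p + e"] S(2)[of "p - e" p] e by (force simp: dist_real_def)+
  show ?thesis
  proof (cases "s = 1")
    case True
    then have "(\<lambda>t. p + s * t) ` {0..e} \<subseteq> {p..p + e}" by auto
    then show ?thesis using that e(1) affine_on_subset[OF right] by blast
  next
    case False
    then have "(\<lambda>t. p + s * t) ` {0..e} \<subseteq> {p - e..p}" using assms(2) by auto
    then show ?thesis using that e(1) affine_on_subset[OF left] by blast
  qed
qed

lemma PLoI_has_side_slope:
  assumes "f \<in> carrier PLoI" "f p = p" "s \<in> {-1, 1}"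
  obtains m where "has_side_slope s f p m"
proof -
  obtain e where e: "e > 0" "affine_on ((\<lambda>t. p + s * t) ` {0..e}) f"
    using PL_homeo_I_affine_near[of f s p] assms(1,3) by auto
  then obtain m c where mc: "\<forall>t\<in>{0..e}. f (p + s * t) = m * (p + s * t) + c"
    by (auto simp: affine_on_def)
  have "p = m * p + c" using mc[rule_format, of 0] e(1) assms(2) by simp
  then have line: "\<forall>t\<in>{0..e}. f (p + s * t) = p + m * (s * t)"
    using mc by (simp add: algebra_simps)
  have "m > 0"
  proof (cases "s = 1")
    case True
    have "f p < f (p + e)" using strict_monoD[OF PLoI_strict_mono[OF assms(1)]] e(1) by simp
    then have "0 < m * e" using line e(1) assms(2) True by simp
    then show ?thesis using e(1) by (simp add: zero_less_mult_iff)
  next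
    case False
    then have "s = -1" using assms(3) by simp
    have "f (p - e) < f p" using strict_monoD[OF PLoI_strict_mono[OF assms(1)]] e(1) by simp
    then have "0 < m * e" using line e(1) assms(2) \<open>s = -1\<close> by simp
    then show ?thesis using e(1) by (simp add: zero_less_mult_iff)
  qed
  then show ?thesis using that line e(1) unfolding has_side_slope_def by blast
qed

lemma side_slopes_one_imp_eventually_id:
  assumes "has_side_slope 1 f p 1" "has_side_slope (-1) f p 1"
  shows "\<forall>\<^sub>F x in nhds p. f x = x"
proof -
  obtain e1 where e1: "e1 > 0" "\<forall>t\<in>{0..e1}. f (p + t) = p + t"
    using assms(1) by (auto simp: has_side_slope_def)
  obtain e2 where e2: "e2 > 0" "\<forall>t\<in>{0..e2}. f (p - t) = p - t"
    using assms(2) by (auto simp: has_side_slope_def)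
  have "f x = x" if "dist x p < min e1 e2" for x
    using e1(2)[rule_format, of "x - p"] e2(2)[rule_format, of "p - x"] that
    by (cases "p \<le> x") (auto simp: dist_real_def)
  then show ?thesis unfolding eventually_nhds_metric using e1(1) e2(1) by (metis min_less_iff_conj)
qed

lemma PLoI_commutator_eventually_id:
  assumes f: "f \<in> carrier PLoI" "f p = p" and g: "g \<in> carrier PLoI" "g p = p"
  shows "\<forall>\<^sub>F x in nhds p. (f \<circ> g \<circ> inv\<^bsub>PLoI\<^esub> f \<circ> inv\<^bsub>PLoI\<^esub> g) x = x"
proof (rule side_slopes_one_imp_eventually_id)
  have "has_side_slope s (f \<circ> g \<circ> inv\<^bsub>PLoI\<^esub> f \<circ> inv\<^bsub>PLoI\<^esub> g) p 1" if s: "s \<in> {-1, 1}" for s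
  proof -
    obtain m1 where m1: "has_side_slope s f p m1" using PLoI_has_side_slope[OF f s] .
    obtain m2 where m2: "has_side_slope s g p m2" using PLoI_has_side_slope[OF g s] .
    have "has_side_slope s (inv\<^bsub>PLoI\<^esub> f) p (1 / m1)"
      by (rule has_side_slope_left_inverse[OF _ m1]) (rule PLoI_inv_apply(1)[OF f(1)])
    moreover have "has_side_slope s (inv\<^bsub>PLoI\<^esub> g) p (1 / m2)"
      by (rule has_side_slope_left_inverse[OF _ m2]) (rule PLoI_inv_apply(1)[OF g(1)])
    ultimately have "has_side_slope s (f \<circ> g \<circ> inv\<^bsub>PLoI\<^esub> f \<circ> inv\<^bsub>PLoI\<^esub> g) p (m1 * m2 * (1 / m1) * (1 / m2))"
      by (intro has_side_slope_comp m1 m2)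
    moreover have "m1 > 0" "m2 > 0" using m1 m2 by (auto simp: has_side_slope_def)
    ultimately show ?thesis by simp
  qed
  then show "has_side_slope 1 (f \<circ> g \<circ> inv\<^bsub>PLoI\<^esub> f \<circ> inv\<^bsub>PLoI\<^esub> g) p 1"
    "has_side_slope (-1) (f \<circ> g \<circ> inv\<^bsub>PLoI\<^esub> f \<circ> inv\<^bsub>PLoI\<^esub> g) p 1" by auto
qed

definition fixed_points :: "(real \<Rightarrow> real) set \<Rightarrow> real set" where
  "fixed_points K = {p. \<forall>k\<in>K. k p = p}"

definition germ_kernel :: "(real \<Rightarrow> real) set \<Rightarrow> real set \<Rightarrow> (real \<Rightarrow> real) set" where
  "germ_kernel X P = {g \<in> X. \<forall>p\<in>P. \<forall>\<^sub>F x in nhds p. g x = x}"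

lemma subgroup_germ_kernel:
  assumes "subgroup X PLoI"
  shows "subgroup (germ_kernel X P) PLoI"
proof (rule PLoI.subgroupI)
  show "germ_kernel X P \<subseteq> carrier PLoI"
    using subgroup.subset[OF assms] by (auto simp: germ_kernel_def)
  show "germ_kernel X P \<noteq> {}"
    using subgroup.one_closed[OF assms] by (auto simp: germ_kernel_def)
next
  fix g assume g: "g \<in> germ_kernel X P"
  then have "g \<in> carrier PLoI" using subgroup.subset[OF assms] by (auto simp: germ_kernel_def)
  then show "inv\<^bsub>PLoI\<^esub> g \<in> germ_kernel X P"
    using g subgroup.m_inv_closed[OF assms]
    by (auto simp: germ_kernel_def PLoI_inv_fixed_iff elim!: eventually_mono)
  fix h assume h: "h \<in> germ_kernel X P"
  have "\<forall>\<^sub>F x in nhds p. (g \<circ> h) x = x" if "p \<in> P" for p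
  proof -
    have "\<forall>\<^sub>F x in nhds p. g x = x" "\<forall>\<^sub>F x in nhds p. h x = x"
      using g h that by (auto simp: germ_kernel_def)
    then show ?thesis by eventually_elim simp
  qed
  then show "g \<otimes>\<^bsub>PLoI\<^esub> h \<in> germ_kernel X P"
    using g h subgroup.m_closed[OF assms] by (auto simp: germ_kernel_def)
qed

lemma derived_subset_germ_kernel:
  assumes "subgroup H PLoI" "\<And>h p. h \<in> H \<Longrightarrow> p \<in> P \<Longrightarrow> h p = p"
  shows "derived PLoI H \<subseteq> germ_kernel H P"
  unfolding derived_def
proof (rule PLoI.generate_subgroup_incl[OF _ subgroup_germ_kernel[OF assms(1)]], safe)
  fix f g assume fg: "f \<in> H" "g \<in> H"
  then have "f \<in> carrier PLoI" "g \<in> carrier PLoI" using subgroup.subset[OF assms(1)] by auto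
  then have "\<forall>\<^sub>F x in nhds p. (f \<circ> g \<circ> inv\<^bsub>PLoI\<^esub> f \<circ> inv\<^bsub>PLoI\<^esub> g) x = x" if "p \<in> P" for p
    using PLoI_commutator_eventually_id assms(2) fg that by blast
  moreover have "f \<otimes>\<^bsub>PLoI\<^esub> g \<otimes>\<^bsub>PLoI\<^esub> inv\<^bsub>PLoI\<^esub> f \<otimes>\<^bsub>PLoI\<^esub> inv\<^bsub>PLoI\<^esub> g \<in> H"
    using fg subgroup.m_closed[OF assms(1)] subgroup.m_inv_closed[OF assms(1)] by blast
  ultimately show "f \<otimes>\<^bsub>PLoI\<^esub> g \<otimes>\<^bsub>PLoI\<^esub> inv\<^bsub>PLoI\<^esub> f \<otimes>\<^bsub>PLoI\<^esub> inv\<^bsub>PLoI\<^esub> g \<in> germ_kernel H P"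
    by (simp add: germ_kernel_def)
qed

section \<open>Orbitals\<close>

definition orbit_of :: "(real \<Rightarrow> real) set \<Rightarrow> real \<Rightarrow> real set" where
  "orbit_of K q = (\<lambda>h. h q) ` K"

lemma orbit_of_image:
  assumes "subgroup K PLoI" "k \<in> K"
  shows "k ` orbit_of K q = orbit_of K q"
proof
  have "k (h q) \<in> (\<lambda>h. h q) ` K" if "h \<in> K" for h
    by (rule image_eqI[OF _ subgroup.m_closed[OF assms(1) assms(2) that]]) simp
  then show "k ` orbit_of K q \<subseteq> orbit_of K q" unfolding orbit_of_def by blast
  have "k \<in> carrier PLoI" using assms subgroup.subset by blast
  have "h q \<in> k ` (\<lambda>h. h q) ` K" if "h \<in> K" for h
  proof (rule image_eqI)
    show "h q = k ((inv\<^bsub>PLoI\<^esub> k \<circ> h) q)" using \<open>k \<in> carrier PLoI\<close> by (simp add: PLoI_inv_apply)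
    show "(inv\<^bsub>PLoI\<^esub> k \<circ> h) q \<in> (\<lambda>h. h q) ` K"
      by (rule image_eqI[OF _ subgroup.m_closed[OF assms(1) subgroup.m_inv_closed[OF assms] that]]) simp
  qed
  then show "orbit_of K q \<subseteq> k ` orbit_of K q" unfolding orbit_of_def by blast
qed

lemma orbit_of_subset:
  assumes "subgroup K PLoI" "q \<in> {0..1}"
  shows "orbit_of K q \<subseteq> {0..1}"
proof
  fix t assume "t \<in> orbit_of K q"
  then obtain h where "h \<in> K" "t = h q" by (auto simp: orbit_of_def)
  then have "PL_homeo_I h" using subgroup.subset[OF assms(1)] by auto
  then show "t \<in> {0..1}" using PL_homeo_I_image \<open>t = h q\<close> assms(2) by blast
qed

lemma orbit_of_Sup_fixed:
  assumes "subgroup K PLoI" "k \<in> K" "q \<in> {0..1}"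
  shows "k (Sup (orbit_of K q)) = Sup (orbit_of K q)"
proof -
  have k: "k \<in> carrier PLoI" using subgroup.subset[OF assms(1)] assms(2) by blast
  have "k (Sup (orbit_of K q)) = Sup (k ` orbit_of K q)"
  proof (rule continuous_at_Sup_mono)
    show "mono k" using strict_mono_mono[OF PLoI_strict_mono[OF k]] .
    show "continuous (at_left (Sup (orbit_of K q))) k"
      using continuous_at_imp_continuous_at_within[OF PLoI_isCont[OF k]] .
    show "orbit_of K q \<noteq> {}" using subgroup.one_closed[OF assms(1)] by (auto simp: orbit_of_def)
    show "bdd_above (orbit_of K q)" using orbit_of_subset[OF assms(1,3)] by (meson bdd_above_Icc bdd_above_mono)
  qed
  then show ?thesis using orbit_of_image[OF assms(1,2)] by simp
qed

lemma orbit_of_Inf_fixed: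
  assumes "subgroup K PLoI" "k \<in> K" "q \<in> {0..1}"
  shows "k (Inf (orbit_of K q)) = Inf (orbit_of K q)"
proof -
  have k: "k \<in> carrier PLoI" using subgroup.subset[OF assms(1)] assms(2) by blast
  have "k (Inf (orbit_of K q)) = Inf (k ` orbit_of K q)"
  proof (rule continuous_at_Inf_mono)
    show "mono k" using strict_mono_mono[OF PLoI_strict_mono[OF k]] .
    show "continuous (at_right (Inf (orbit_of K q))) k"
      using continuous_at_imp_continuous_at_within[OF PLoI_isCont[OF k]] .
    show "orbit_of K q \<noteq> {}" using subgroup.one_closed[OF assms(1)] by (auto simp: orbit_of_def)
    show "bdd_below (orbit_of K q)" using orbit_of_subset[OF assms(1,3)] by (meson bdd_below_Icc bdd_below_mono)
  qed
  then show ?thesis using orbit_of_image[OF assms(1,2)] by simp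
qed

lemma PLoI_orbital:
  assumes K: "subgroup K PLoI" and y: "y \<in> K" "y q \<noteq> q"
  obtains a b where "a < q" "q < b" "a \<in> fixed_points K" "b \<in> fixed_points K"
    "\<And>c d. a < c \<Longrightarrow> d < b \<Longrightarrow> \<exists>g\<in>K. d < g c"
proof -
  let ?O = "orbit_of K q"
  have carrier: "k \<in> carrier PLoI" if "k \<in> K" for k using subgroup.subset[OF K] that by blast
  have "q \<in> {0<..<1}" using PL_homeo_I_fixes[of y q] carrier[OF y(1)] y(2) by auto
  then have q: "q \<in> {0..1}" by simp
  have ne: "?O \<noteq> {}" using subgroup.one_closed[OF K] by (auto simp: orbit_of_def)
  have bdd: "bdd_above ?O" "bdd_below ?O"
    using orbit_of_subset[OF K q] by (meson bdd_above_Icc bdd_above_mono bdd_below_Icc bdd_below_mono)+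
  have inv_y: "inv\<^bsub>PLoI\<^esub> y \<in> K" using subgroup.m_inv_closed[OF K y(1)] .
  have "(inv\<^bsub>PLoI\<^esub> y) q < q \<longleftrightarrow> q < y q" "q < (inv\<^bsub>PLoI\<^esub> y) q \<longleftrightarrow> y q < q"
    using strict_mono_less[OF PLoI_strict_mono[OF carrier[OF y(1)]]] PLoI_inv_apply(2)[OF carrier[OF y(1)]]
    by metis+
  moreover have "y q \<in> ?O" "(inv\<^bsub>PLoI\<^esub> y) q \<in> ?O" using y(1) inv_y by (auto simp: orbit_of_def)
  ultimately have "\<exists>t\<in>?O. t < q" "\<exists>t\<in>?O. q < t" using y(2) by (metis linorder_neqE)+
  then have "Inf ?O < q" "q < Sup ?O"
    using cInf_less_iff[OF ne bdd(2)] less_cSup_iff[OF ne bdd(1)] by auto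
  moreover have "Inf ?O \<in> fixed_points K" "Sup ?O \<in> fixed_points K"
    using orbit_of_Inf_fixed[OF K _ q] orbit_of_Sup_fixed[OF K _ q] by (auto simp: fixed_points_def)
  moreover have "\<exists>g\<in>K. d < g c" if cd: "Inf ?O < c" "d < Sup ?O" for c d
  proof -
    obtain k1 where k1: "k1 \<in> K" "k1 q < c" using cInf_less_iff[OF ne bdd(2)] cd(1) by (auto simp: orbit_of_def)
    obtain k2 where k2: "k2 \<in> K" "d < k2 q" using less_cSup_iff[OF ne bdd(1)] cd(2) by (auto simp: orbit_of_def)
    have "k1 q < k1 ((inv\<^bsub>PLoI\<^esub> k1) c)" using k1 PLoI_inv_apply(2)[OF carrier[OF k1(1)]] by simp
    then have "q < (inv\<^bsub>PLoI\<^esub> k1) c" using strict_mono_less[OF PLoI_strict_mono[OF carrier[OF k1(1)]]] by blast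
    then have "d < (k2 \<circ> inv\<^bsub>PLoI\<^esub> k1) c"
      using k2 strict_monoD[OF PLoI_strict_mono[OF carrier[OF k2(1)]]] by fastforce
    moreover have "k2 \<circ> inv\<^bsub>PLoI\<^esub> k1 \<in> K"
      using subgroup.m_closed[OF K k2(1) subgroup.m_inv_closed[OF K k1(1)]] by simp
    ultimately show ?thesis by blast
  qed
  ultimately show ?thesis using that by blast
qed

lemma PLoI_Icc_invariant:
  assumes "y \<in> carrier PLoI" "y c = c" "y d = d" "t \<in> {c..d}"
  shows "y t \<in> {c..d}"
  using assms strict_mono_less_eq[OF PLoI_strict_mono[OF assms(1)]] by (metis atLeastAtMost_iff)

lemma PLoI_agree_inv:
  assumes "y \<in> carrier PLoI" "w \<in> carrier PLoI" "y c = c" "y d = d" "\<forall>t\<in>{c..d}. w t = y t"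
  shows "\<forall>t\<in>{c..d}. (inv\<^bsub>PLoI\<^esub> w) t = (inv\<^bsub>PLoI\<^esub> y) t"
proof
  fix t assume "t \<in> {c..d}"
  then have "(inv\<^bsub>PLoI\<^esub> y) t \<in> {c..d}"
    using PLoI_Icc_invariant[OF PLoI.inv_closed[OF assms(1)]] assms(1,3,4) by (simp add: PLoI_inv_fixed_iff)
  then have "w ((inv\<^bsub>PLoI\<^esub> y) t) = t" using assms(5) PLoI_inv_apply(2)[OF assms(1)] by simp
  then show "(inv\<^bsub>PLoI\<^esub> w) t = (inv\<^bsub>PLoI\<^esub> y) t" using PLoI_inv_apply(1)[OF assms(2)] by metis
qed

section \<open>Approximation on orbitals along the derived series\<close>

definition approximable :: "(real \<Rightarrow> real) set \<Rightarrow> real \<Rightarrow> real \<Rightarrow> real \<Rightarrow> (real \<Rightarrow> real) \<Rightarrow> bool" where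
  "approximable V a b e y \<longleftrightarrow>
     (\<forall>t \<in> {a<..a + e} \<union> {b - e..<b}. y t = t) \<and>
     (\<forall>c \<in> {a<..a + e}. \<forall>d \<in> {b - e..<b}. \<exists>w\<in>V. \<forall>t\<in>{c..d}. w t = y t)"

definition approximable_subgroup :: "(real \<Rightarrow> real) set \<Rightarrow> real \<Rightarrow> real \<Rightarrow> (real \<Rightarrow> real) set" where
  "approximable_subgroup V a b = {y \<in> carrier PLoI. \<exists>e>0. approximable V a b e y}"

lemma approximableD:
  assumes "approximable V a b e y" "c \<in> {a<..a + e}" "d \<in> {b - e..<b}"
  obtains w where "w \<in> V" "\<forall>t\<in>{c..d}. w t = y t" "y c = c" "y d = d"
  using assms unfolding approximable_def by blast

lemma approximable_mono:
  assumes "approximable V a b e y" "e' \<le> e"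
  shows "approximable V a b e' y"
proof -
  have "{a<..a + e'} \<subseteq> {a<..a + e}" "{b - e'..<b} \<subseteq> {b - e..<b}" using assms(2) by auto
  then show ?thesis using assms(1) unfolding approximable_def by blast
qed

lemma approximable_common:
  assumes "y1 \<in> approximable_subgroup V a b" "y2 \<in> approximable_subgroup V a b"
  obtains e where "e > 0" "approximable V a b e y1" "approximable V a b e y2"
proof -
  obtain e1 e2 where "e1 > 0" "approximable V a b e1 y1" "e2 > 0" "approximable V a b e2 y2"
    using assms by (auto simp: approximable_subgroup_def)
  then show ?thesis using that[of "min e1 e2"] approximable_mono by simp
qed

lemma approximable_comp:
  assumes V: "subgroup V PLoI" and y: "y1 \<in> carrier PLoI" "y2 \<in> carrier PLoI"
    and approx: "approximable V a b e y1" "approximable V a b e y2"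
  shows "approximable V a b e (y1 \<circ> y2)"
  unfolding approximable_def
proof (intro conjI ballI)
  fix t assume "t \<in> {a<..a + e} \<union> {b - e..<b}"
  then show "(y1 \<circ> y2) t = t" using approx by (simp add: approximable_def)
next
  fix c d assume cd: "c \<in> {a<..a + e}" "d \<in> {b - e..<b}"
  obtain w1 where w1: "w1 \<in> V" "\<forall>t\<in>{c..d}. w1 t = y1 t" using approximableD[OF approx(1) cd] by blast
  obtain w2 where w2: "w2 \<in> V" "\<forall>t\<in>{c..d}. w2 t = y2 t" "y2 c = c" "y2 d = d"
    using approximableD[OF approx(2) cd] by blast
  have "\<forall>t\<in>{c..d}. (w1 \<circ> w2) t = (y1 \<circ> y2) t"
    using w1(2) w2(2) PLoI_Icc_invariant[OF y(2) w2(3,4)] by simp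
  moreover have "w1 \<circ> w2 \<in> V" using subgroup.m_closed[OF V w1(1) w2(1)] by simp
  ultimately show "\<exists>w\<in>V. \<forall>t\<in>{c..d}. w t = (y1 \<circ> y2) t" by blast
qed

lemma approximable_inv:
  assumes V: "subgroup V PLoI" and y: "y \<in> carrier PLoI" and approx: "approximable V a b e y"
  shows "approximable V a b e (inv\<^bsub>PLoI\<^esub> y)"
  unfolding approximable_def
proof (intro conjI ballI)
  fix t assume "t \<in> {a<..a + e} \<union> {b - e..<b}"
  then show "(inv\<^bsub>PLoI\<^esub> y) t = t" using approx y by (simp add: approximable_def PLoI_inv_fixed_iff)
next
  fix c d assume cd: "c \<in> {a<..a + e}" "d \<in> {b - e..<b}"
  obtain w where w: "w \<in> V" "\<forall>t\<in>{c..d}. w t = y t" "y c = c" "y d = d"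
    using approximableD[OF approx cd] by blast
  have "w \<in> carrier PLoI" using subgroup.subset[OF V] w(1) by blast
  then have "\<forall>t\<in>{c..d}. (inv\<^bsub>PLoI\<^esub> w) t = (inv\<^bsub>PLoI\<^esub> y) t" using PLoI_agree_inv y w by blast
  moreover have "inv\<^bsub>PLoI\<^esub> w \<in> V" using subgroup.m_inv_closed[OF V w(1)] .
  ultimately show "\<exists>w\<in>V. \<forall>t\<in>{c..d}. w t = (inv\<^bsub>PLoI\<^esub> y) t" by blast
qed

lemma approximable_commutator:
  assumes V: "subgroup V PLoI" and y: "y1 \<in> carrier PLoI" "y2 \<in> carrier PLoI"
    and approx: "approximable V a b e y1" "approximable V a b e y2"
  shows "approximable (derived PLoI V) a b e (y1 \<circ> y2 \<circ> inv\<^bsub>PLoI\<^esub> y1 \<circ> inv\<^bsub>PLoI\<^esub> y2)"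
  unfolding approximable_def
proof (intro conjI ballI)
  fix t assume "t \<in> {a<..a + e} \<union> {b - e..<b}"
  then have "y1 t = t" "y2 t = t" using approx by (simp_all add: approximable_def)
  moreover have "(inv\<^bsub>PLoI\<^esub> y1) t = t" "(inv\<^bsub>PLoI\<^esub> y2) t = t"
    using calculation y by (simp_all add: PLoI_inv_fixed_iff)
  ultimately show "(y1 \<circ> y2 \<circ> inv\<^bsub>PLoI\<^esub> y1 \<circ> inv\<^bsub>PLoI\<^esub> y2) t = t" by simp
next
  fix c d assume cd: "c \<in> {a<..a + e}" "d \<in> {b - e..<b}"
  obtain w1 where w1: "w1 \<in> V" "\<forall>t\<in>{c..d}. w1 t = y1 t" "y1 c = c" "y1 d = d"
    using approximableD[OF approx(1) cd] by blast
  obtain w2 where w2: "w2 \<in> V" "\<forall>t\<in>{c..d}. w2 t = y2 t" "y2 c = c" "y2 d = d"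
    using approximableD[OF approx(2) cd] by blast
  have w: "w1 \<in> carrier PLoI" "w2 \<in> carrier PLoI" using subgroup.subset[OF V] w1(1) w2(1) by blast+
  have inv_fixed: "(inv\<^bsub>PLoI\<^esub> y1) c = c" "(inv\<^bsub>PLoI\<^esub> y1) d = d"
    "(inv\<^bsub>PLoI\<^esub> y2) c = c" "(inv\<^bsub>PLoI\<^esub> y2) d = d"
    using w1(3,4) w2(3,4) y by (simp_all add: PLoI_inv_fixed_iff)
  have "\<forall>t\<in>{c..d}. (w1 \<circ> w2 \<circ> inv\<^bsub>PLoI\<^esub> w1 \<circ> inv\<^bsub>PLoI\<^esub> w2) t
      = (y1 \<circ> y2 \<circ> inv\<^bsub>PLoI\<^esub> y1 \<circ> inv\<^bsub>PLoI\<^esub> y2) t"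
    using w1(2) w2(2) PLoI_agree_inv[OF y(1) w(1) w1(3,4,2)] PLoI_agree_inv[OF y(2) w(2) w2(3,4,2)]
      PLoI_Icc_invariant[OF y(2) w2(3,4)] PLoI_Icc_invariant[OF PLoI.inv_closed[OF y(1)] inv_fixed(1,2)]
      PLoI_Icc_invariant[OF PLoI.inv_closed[OF y(2)] inv_fixed(3,4)]
    by simp
  moreover have "w1 \<circ> w2 \<circ> inv\<^bsub>PLoI\<^esub> w1 \<circ> inv\<^bsub>PLoI\<^esub> w2 \<in> derived PLoI V"
    using w1(1) w2(1) unfolding derived_def by (force intro: generate.incl)
  ultimately show "\<exists>w\<in>derived PLoI V. \<forall>t\<in>{c..d}. w t = (y1 \<circ> y2 \<circ> inv\<^bsub>PLoI\<^esub> y1 \<circ> inv\<^bsub>PLoI\<^esub> y2) t"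
    by blast
qed

lemma subgroup_approximable_subgroup:
  assumes V: "subgroup V PLoI"
  shows "subgroup (approximable_subgroup V a b) PLoI"
proof (rule PLoI.subgroupI)
  show "approximable_subgroup V a b \<subseteq> carrier PLoI" by (auto simp: approximable_subgroup_def)
  have "approximable V a b 1 id"
    using subgroup.one_closed[OF V] by (auto simp: approximable_def intro!: bexI[of _ id])
  then have "id \<in> approximable_subgroup V a b"
    using PL_homeo_I_id unfolding approximable_subgroup_def by (auto intro!: exI[of _ 1])
  then show "approximable_subgroup V a b \<noteq> {}" by blast
next
  fix y assume "y \<in> approximable_subgroup V a b"
  then show "inv\<^bsub>PLoI\<^esub> y \<in> approximable_subgroup V a b"
    using approximable_inv[OF V] by (auto simp: approximable_subgroup_def simp del: carrier_PLoI)
next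
  fix y1 y2 assume y: "y1 \<in> approximable_subgroup V a b" "y2 \<in> approximable_subgroup V a b"
  then obtain e where "e > 0" "approximable V a b e y1" "approximable V a b e y2"
    by (rule approximable_common)
  then show "y1 \<otimes>\<^bsub>PLoI\<^esub> y2 \<in> approximable_subgroup V a b"
    using y approximable_comp[OF V] PLoI.m_closed
    by (auto simp: approximable_subgroup_def simp del: carrier_PLoI)
qed

lemma derived_subset_approximable_subgroup:
  assumes V: "subgroup V PLoI" and X: "X \<subseteq> approximable_subgroup V a b"
  shows "derived PLoI X \<subseteq> approximable_subgroup (derived PLoI V) a b"
  unfolding derived_def[of PLoI X]
proof (rule PLoI.generate_subgroup_incl[OF _ subgroup_approximable_subgroup[OF
        PLoI.derived_is_subgroup[OF subgroup.subset[OF V]]]], safe)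
  fix y1 y2 assume "y1 \<in> X" "y2 \<in> X"
  then have y: "y1 \<in> approximable_subgroup V a b" "y2 \<in> approximable_subgroup V a b" using X by auto
  then obtain e where "e > 0" "approximable V a b e y1" "approximable V a b e y2"
    by (rule approximable_common)
  moreover have "y1 \<in> carrier PLoI" "y2 \<in> carrier PLoI" using y by (auto simp: approximable_subgroup_def)
  ultimately show "y1 \<otimes>\<^bsub>PLoI\<^esub> y2 \<otimes>\<^bsub>PLoI\<^esub> inv\<^bsub>PLoI\<^esub> y1 \<otimes>\<^bsub>PLoI\<^esub> inv\<^bsub>PLoI\<^esub> y2
      \<in> approximable_subgroup (derived PLoI V) a b"
    using approximable_commutator[OF V] PLoI.m_closed PLoI.inv_closed
    by (auto simp: approximable_subgroup_def simp del: carrier_PLoI)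
qed

lemma germ_kernel_subset_approximable_subgroup:
  assumes K: "subgroup K PLoI" and ab: "a \<in> fixed_points K" "b \<in> fixed_points K"
    and transitive: "\<And>c d. a < c \<Longrightarrow> d < b \<Longrightarrow> \<exists>g\<in>K. d < g c"
  shows "germ_kernel K (fixed_points K) \<subseteq> approximable_subgroup (derived PLoI K) a b"
proof
  fix y assume "y \<in> germ_kernel K (fixed_points K)"
  then have y: "y \<in> K" "\<forall>\<^sub>F x in nhds a. y x = x" "\<forall>\<^sub>F x in nhds b. y x = x"
    using ab by (auto simp: germ_kernel_def)
  have carrier: "k \<in> carrier PLoI" if "k \<in> K" for k using subgroup.subset[OF K] that by blast
  obtain e1 e2 where "e1 > 0" "\<forall>x. dist x a < e1 \<longrightarrow> y x = x" "e2 > 0" "\<forall>x. dist x b < e2 \<longrightarrow> y x = x"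
    using y(2,3) unfolding eventually_nhds_metric by blast
  then obtain e where e: "e > 0" "\<And>x. dist x a < e \<Longrightarrow> y x = x" "\<And>x. dist x b < e \<Longrightarrow> y x = x"
    by (metis min_less_iff_conj)
  have ends: "y t = t" if "t \<in> {a<..a + e / 2} \<union> {b - e / 2..<b}" for t
    using e that by (auto simp: dist_real_def)
  have "approximable (derived PLoI K) a b (e / 2) y"
    unfolding approximable_def
  proof (intro conjI ballI)
    fix c d assume c: "c \<in> {a<..a + e / 2}" and d: "d \<in> {b - e / 2..<b}"
    obtain g where g: "g \<in> K" "d < g c" using transitive c d by auto
    let ?w = "y \<circ> g \<circ> inv\<^bsub>PLoI\<^esub> y \<circ> inv\<^bsub>PLoI\<^esub> g"
    \<comment> \<open>inv g maps [c, d] into (a, c), where y and hence inv y is the identity\<close>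
    have "?w t = y t" if t: "t \<in> {c..d}" for t
    proof -
      have mono: "strict_mono (inv\<^bsub>PLoI\<^esub> g)" using PLoI_strict_mono[OF PLoI.inv_closed[OF carrier[OF g(1)]]] .
      have "(inv\<^bsub>PLoI\<^esub> g) a = a" using ab(1) g(1) carrier[OF g(1)] by (simp add: fixed_points_def PLoI_inv_fixed_iff)
      moreover have "(inv\<^bsub>PLoI\<^esub> g) (g c) = c" using PLoI_inv_apply(1)[OF carrier[OF g(1)]] .
      ultimately have "(inv\<^bsub>PLoI\<^esub> g) t \<in> {a<..a + e / 2}"
        using t c g(2) strict_mono_less[OF mono, of a t] strict_mono_less[OF mono, of t "g c"] by auto
      then have "(inv\<^bsub>PLoI\<^esub> y) ((inv\<^bsub>PLoI\<^esub> g) t) = (inv\<^bsub>PLoI\<^esub> g) t"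
        using ends carrier[OF y(1)] by (simp add: PLoI_inv_fixed_iff)
      then show ?thesis using PLoI_inv_apply(2)[OF carrier[OF g(1)]] by simp
    qed
    moreover have "?w \<in> derived PLoI K"
      using y(1) g(1) unfolding derived_def by (force intro: generate.incl)
    ultimately show "\<exists>w\<in>derived PLoI K. \<forall>t\<in>{c..d}. w t = y t" by blast
  qed (rule ends)
  then show "y \<in> approximable_subgroup (derived PLoI K) a b"
    using carrier[OF y(1)] e(1) unfolding approximable_subgroup_def by (auto intro!: exI[of _ "e / 2"])
qed

lemma derived_pow_germ_kernel_subset_approximable_subgroup:
  assumes K: "subgroup K PLoI" and ab: "a \<in> fixed_points K" "b \<in> fixed_points K"
    and transitive: "\<And>c d. a < c \<Longrightarrow> d < b \<Longrightarrow> \<exists>g\<in>K. d < g c"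
  shows "(derived PLoI ^^ j) (germ_kernel K (fixed_points K))
    \<subseteq> approximable_subgroup ((derived PLoI ^^ j) (derived PLoI K)) a b"
proof (induction j)
  case 0
  show ?case using germ_kernel_subset_approximable_subgroup[OF assms] by simp
next
  case (Suc j)
  have "subgroup ((derived PLoI ^^ j) (derived PLoI K)) PLoI"
    using PLoI.exp_of_derived_is_subgroup[OF PLoI.derived_is_subgroup[OF subgroup.subset[OF K]]] .
  then show ?case using derived_subset_approximable_subgroup[OF _ Suc] by simp
qed

lemma derived_pow_germ_kernel_trivial:
  assumes K: "subgroup K PLoI" and trivial: "(derived PLoI ^^ Suc k) K = {id}"
  shows "(derived PLoI ^^ k) (germ_kernel K (fixed_points K)) = {id}"
proof -
  let ?L = "germ_kernel K (fixed_points K)"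
  have L: "subgroup ?L PLoI" using subgroup_germ_kernel[OF K] .
  have "y = id" if y: "y \<in> (derived PLoI ^^ k) ?L" for y
  proof (rule ext, rule ccontr)
    fix q assume "y q \<noteq> id q"
    then have moved: "y q \<noteq> q" by simp
    have yK: "y \<in> K"
      using y PLoI.exp_of_derived_subset[OF L] by (auto simp: germ_kernel_def)
    obtain a b where ab: "a < q" "q < b" "a \<in> fixed_points K" "b \<in> fixed_points K"
      and transitive: "\<And>c d. a < c \<Longrightarrow> d < b \<Longrightarrow> \<exists>g\<in>K. d < g c"
      using PLoI_orbital[OF K yK moved] by blast
    have "(derived PLoI ^^ k) (derived PLoI K) = {id}"
      using trivial by (simp add: funpow_Suc_right del: funpow.simps)
    then have "y \<in> approximable_subgroup {id} a b"
      using derived_pow_germ_kernel_subset_approximable_subgroup[OF K ab(3,4) transitive, of k] y by auto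
    then obtain e where e: "e > 0" "approximable {id} a b e y"
      by (auto simp: approximable_subgroup_def)
    have "min q (a + e) \<in> {a<..a + e}" "max q (b - e) \<in> {b - e..<b}" using ab(1,2) e(1) by auto
    then obtain w where "w \<in> {id}" "\<forall>t\<in>{min q (a + e)..max q (b - e)}. w t = y t"
      using approximableD[OF e(2)] by metis
    then have "y q = q" by auto
    with moved show False by simp
  qed
  moreover have "id \<in> (derived PLoI ^^ k) ?L"
    using subgroup.one_closed[OF PLoI.exp_of_derived_is_subgroup[OF L]] by simp
  ultimately show ?thesis by blast
qed

section \<open>Virtually solvable subgroups\<close>

lemma fixed_points_if_powers_in:
  assumes "H \<subseteq> carrier PLoI" "\<forall>h\<in>H. \<exists>n>0. h [^]\<^bsub>PLoI\<^esub> (n::nat) \<in> K"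
    and "h \<in> H" "p \<in> fixed_points K"
  shows "h p = p"
proof -
  obtain n :: nat where "n > 0" "h [^]\<^bsub>PLoI\<^esub> n \<in> K" using assms(2,3) by blast
  then show ?thesis using PLoI_pow_fixed[of h n p] assms(1,3,4) by (auto simp: fixed_points_def)
qed

lemma germ_kernel_powers_in:
  assumes "subgroup H PLoI" "\<forall>h\<in>H. \<exists>n>0. h [^]\<^bsub>PLoI\<^esub> (n::nat) \<in> K"
  shows "\<forall>h\<in>germ_kernel H P. \<exists>n>0. h [^]\<^bsub>PLoI\<^esub> (n::nat) \<in> germ_kernel K P"
proof
  fix h assume h: "h \<in> germ_kernel H P"
  then obtain n :: nat where "n > 0" "h [^]\<^bsub>PLoI\<^esub> n \<in> K"
    using assms(2) by (auto simp: germ_kernel_def)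
  moreover have "h [^]\<^bsub>PLoI\<^esub> n \<in> germ_kernel H P"
    using PLoI.subgroup_int_pow_closed[OF subgroup_germ_kernel[OF assms(1)] h, of "int n"]
    by (simp add: int_pow_int)
  ultimately show "\<exists>n>0. h [^]\<^bsub>PLoI\<^esub> (n::nat) \<in> germ_kernel K P"
    by (auto simp: germ_kernel_def)
qed

lemma PLoI_derived_trivial_if_powers_in:
  assumes "subgroup H PLoI" "subgroup K PLoI" "\<forall>h\<in>H. \<exists>n>0. h [^]\<^bsub>PLoI\<^esub> (n::nat) \<in> K"
    and "(derived PLoI ^^ k) K = {id}"
  shows "\<exists>n. (derived PLoI ^^ n) H = {id}"
  using assms
proof (induction k arbitrary: H K)
  case 0
  then have "fixed_points K = UNIV" by (simp add: fixed_points_def)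
  then have "h = id" if "h \<in> H" for h
    using fixed_points_if_powers_in[OF subgroup.subset[OF "0.prems"(1)] "0.prems"(3) that] by auto
  then have "H = {id}" using subgroup.one_closed[OF "0.prems"(1)] by auto
  then show ?case by (metis funpow_0)
next
  case (Suc k)
  let ?P = "fixed_points K"
  obtain n where n: "(derived PLoI ^^ n) (germ_kernel H ?P) = {id}"
    using Suc.IH[OF subgroup_germ_kernel[OF Suc.prems(1)] subgroup_germ_kernel[OF Suc.prems(2)]
        germ_kernel_powers_in[OF Suc.prems(1,3)] derived_pow_germ_kernel_trivial[OF Suc.prems(2,4)]]
    by blast
  have "derived PLoI H \<subseteq> germ_kernel H ?P"
    using fixed_points_if_powers_in[OF subgroup.subset[OF Suc.prems(1)] Suc.prems(3)]
    by (intro derived_subset_germ_kernel[OF Suc.prems(1)])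
  then have "(derived PLoI ^^ Suc n) H \<subseteq> {id}"
    using PLoI.mono_exp_of_derived[of "derived PLoI H" "germ_kernel H ?P" n] n
    by (simp add: funpow_Suc_right del: funpow.simps)
  moreover have "id \<in> (derived PLoI ^^ Suc n) H"
    using subgroup.one_closed[OF PLoI.exp_of_derived_is_subgroup[OF Suc.prems(1)], of "Suc n"]
    by (simp del: funpow.simps)
  ultimately show ?case by blast
qed

theorem corollary3:
  assumes "subgroup H PLoI"
    and "virtually_solvable (PLoI\<lparr>carrier := H\<rparr>)"
  shows "solvable (PLoI\<lparr>carrier := H\<rparr>)"
proof -
  let ?G = "PLoI\<lparr>carrier := H\<rparr>"
  interpret G: group ?G using PLoI.subgroup_imp_group[OF assms(1)] .
  obtain K where K: "subgroup K ?G" "finite (rcosets\<^bsub>?G\<^esub> K)" "solvable (?G\<lparr>carrier := K\<rparr>)"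
    using assms(2) unfolding virtually_solvable_def by blast
  have K_PLoI: "subgroup K PLoI" using PLoI.incl_subgroup[OF assms(1) K(1)] .
  obtain k where "(derived PLoI ^^ k) K = {id}"
    using K(3) PLoI.solvable_subgroup_iff[OF K_PLoI] by auto
  moreover have "\<forall>h\<in>H. \<exists>n>0. h [^]\<^bsub>PLoI\<^esub> (n::nat) \<in> K"
    using G.finite_index_pow_in_subgroup[OF K(1,2)] by (simp add: PLoI.nat_pow_consistent[symmetric])
  ultimately obtain n where "(derived PLoI ^^ n) H = {id}"
    using PLoI_derived_trivial_if_powers_in[OF assms(1) K_PLoI] by blast
  then show ?thesis using PLoI.solvable_subgroup_iff[OF assms(1)] by auto
qed

end
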